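(* Let $K$ be a compact Lie group which is a maximal compact subgroup of a linear semisimple complex algebraic group, let $c\in K$ and let $(a,b)\in K\times K$ with $aba^{-1}b^{-1}=c$. If $a$ is generic, then the cyclic group generated by the Dehn twist $\tau_\alpha$, which acts on $\mathcal{H}(a,b)=\{a\}\times bK_a$ by $(a,b')\mapsto(a,b'a)$, acts ergodically on $\mathcal{H}(a,b)$ (with respect to the pushforward of Haar measure on $K_a$ under $\zeta\mapsto(a,b\zeta)$). Similarly, if $b$ is generic, then the cyclic group generated by the Dehn twist $\tau_\beta$ acts ergodically on $\mathcal{H}'(a,b)=aK_b\times\{b\}$ (with respect to the pushforward of Haar measure on $K_b$ under $\zeta\mapsto(a\zeta,b)$).
   Context: Here $\Sigma$ is the genus-one surface with one boundary component, $\pi_1(\Sigma)$ is free on simple loops $\alpha,\beta$ meeting once, and representations $\rho$ of $\pi_1(\Sigma)$ into $K$ are identified with pairs $(a,b)=(\rho(\alpha),\rho(\beta))$; the Dehn twist along $\alpha$ fixes $\alpha$ and sends $\beta$ to $\beta\alpha$, so acts by $(a,b)\mapsto(a,ba)$, and the Dehn twist along $\beta$ acts analogously with the roles of $\alpha,\beta$ exchanged, preserving $aK_b\times\{b\}$ and acting on it as right multiplication of the first coordinate by $b^{\pm1}$. $K_x$ denotes the centralizer of $x$ in $K$. An element $x\in K$ is generic if it is regular (its centralizer $K_x$ is a maximal torus) and the cyclic group $\langle x\rangle$ is dense in $K_x$. *)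

theory Defs
  imports "HOL-Analysis.Analysis" "HOL-Probability.Probability"
begin

type_synonym 'n cmat = "complex^'n^'n"

definition matrix_subgroup :: "('n::finite) cmat set \<Rightarrow> bool" where
  "matrix_subgroup S \<longleftrightarrow> S \<subseteq> {g. invertible g} \<and> mat 1 \<in> S \<and>
     (\<forall>x\<in>S. \<forall>y\<in>S. x ** y \<in> S) \<and> (\<forall>x\<in>S. matrix_inv x \<in> S)"

inductive_set poly_fun :: "(('n::finite) cmat \<Rightarrow> complex) set" where
  pconst: "(\<lambda>g. c) \<in> poly_fun"
| pcoord: "(\<lambda>g. g $ i $ j) \<in> poly_fun"
| padd: "p \<in> poly_fun \<Longrightarrow> q \<in> poly_fun \<Longrightarrow> (\<lambda>g. p g + q g) \<in> poly_fun"
| pmult: "p \<in> poly_fun \<Longrightarrow> q \<in> poly_fun \<Longrightarrow> (\<lambda>g. p g * q g) \<in> poly_fun"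

definition linear_algebraic_group :: "('n::finite) cmat set \<Rightarrow> bool" where
  "linear_algebraic_group G \<longleftrightarrow> matrix_subgroup G \<and>
     (\<exists>P \<subseteq> poly_fun. G = {g. invertible g \<and> (\<forall>p\<in>P. p g = 0)})"

definition lie_algebra :: "('n::finite) cmat set \<Rightarrow> 'n cmat set" where
  "lie_algebra G = {X. \<exists>\<gamma>::real \<Rightarrow> 'n cmat. \<gamma> 0 = mat 1 \<and> (\<forall>t. \<gamma> t \<in> G) \<and>
                       (\<gamma> has_vector_derivative X) (at 0)}"

definition lie_bracket :: "('n::finite) cmat \<Rightarrow> 'n cmat \<Rightarrow> 'n cmat" where
  "lie_bracket X Y = X ** Y - Y ** X"

definition lie_ideal :: "('n::finite) cmat set \<Rightarrow> 'n cmat set \<Rightarrow> bool" where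
  "lie_ideal g I \<longleftrightarrow> subspace I \<and> I \<subseteq> g \<and> (\<forall>X\<in>g. \<forall>Y\<in>I. lie_bracket X Y \<in> I)"

text \<open>A Lie algebra is semisimple iff it has no nonzero abelian ideal
  (equivalently: its radical is zero).\<close>
definition semisimple_lie_algebra :: "('n::finite) cmat set \<Rightarrow> bool" where
  "semisimple_lie_algebra g \<longleftrightarrow>
     (\<forall>I. lie_ideal g I \<and> (\<forall>X\<in>I. \<forall>Y\<in>I. lie_bracket X Y = 0) \<longrightarrow> I = {0})"

definition semisimple_algebraic_group :: "('n::finite) cmat set \<Rightarrow> bool" where
  "semisimple_algebraic_group G \<longleftrightarrow> linear_algebraic_group G \<and> connected G \<and>
     semisimple_lie_algebra (lie_algebra G)"

definition maximal_compact_subgroup :: "('n::finite) cmat set \<Rightarrow> 'n cmat set \<Rightarrow> bool" where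
  "maximal_compact_subgroup G K \<longleftrightarrow> matrix_subgroup K \<and> compact K \<and> K \<subseteq> G \<and>
     (\<forall>K'. matrix_subgroup K' \<and> compact K' \<and> K \<subseteq> K' \<and> K' \<subseteq> G \<longrightarrow> K' = K)"

definition centralizer :: "('n::finite) cmat set \<Rightarrow> 'n cmat \<Rightarrow> 'n cmat set" where
  "centralizer K x = {k \<in> K. k ** x = x ** k}"

definition torus_in :: "('n::finite) cmat set \<Rightarrow> 'n cmat set \<Rightarrow> bool" where
  "torus_in K T \<longleftrightarrow> matrix_subgroup T \<and> T \<subseteq> K \<and> compact T \<and> connected T \<and>
     (\<forall>x\<in>T. \<forall>y\<in>T. x ** y = y ** x)"

definition maximal_torus :: "('n::finite) cmat set \<Rightarrow> 'n cmat set \<Rightarrow> bool" where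
  "maximal_torus K T \<longleftrightarrow> torus_in K T \<and> (\<forall>T'. torus_in K T' \<and> T \<subseteq> T' \<longrightarrow> T' = T)"

primrec mpow :: "('n::finite) cmat \<Rightarrow> nat \<Rightarrow> 'n cmat" where
  "mpow x 0 = mat 1"
| "mpow x (Suc k) = x ** mpow x k"

definition cyclic_group :: "('n::finite) cmat \<Rightarrow> 'n cmat set" where
  "cyclic_group x = range (mpow x) \<union> range (mpow (matrix_inv x))"

definition regular :: "('n::finite) cmat set \<Rightarrow> 'n cmat \<Rightarrow> bool" where
  "regular K x \<longleftrightarrow> maximal_torus K (centralizer K x)"

definition generic :: "('n::finite) cmat set \<Rightarrow> 'n cmat \<Rightarrow> bool" where
  "generic K x \<longleftrightarrow> x \<in> K \<and> regular K x \<and> closure (cyclic_group x) = centralizer K x"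

definition haar_measure :: "('n::finite) cmat set \<Rightarrow> 'n cmat measure \<Rightarrow> bool" where
  "haar_measure H \<mu> \<longleftrightarrow> prob_space \<mu> \<and> space \<mu> = H \<and>
     sets \<mu> = sets (restrict_space borel H) \<and>
     (\<forall>g\<in>H. \<forall>A\<in>sets \<mu>. emeasure \<mu> ((\<lambda>z. g ** z) ` A) = emeasure \<mu> A)"

definition ergodic_cyclic :: "'a measure \<Rightarrow> ('a \<Rightarrow> 'a) \<Rightarrow> bool" where
  "ergodic_cyclic M T \<longleftrightarrow>
     (\<forall>A\<in>sets M. T ` A = A \<longrightarrow> emeasure M A = 0 \<or> emeasure M (space M - A) = 0)"

definition tau_alpha :: "('n::finite) cmat \<times> 'n cmat \<Rightarrow> 'n cmat \<times> 'n cmat" where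
  "tau_alpha p = (fst p, snd p ** fst p)"

definition tau_beta :: "('n::finite) cmat \<times> 'n cmat \<Rightarrow> 'n cmat \<times> 'n cmat" where
  "tau_beta p = (fst p ** snd p, snd p)"

definition leaf_alpha :: "('n::finite) cmat set \<Rightarrow> 'n cmat \<Rightarrow> 'n cmat \<Rightarrow> ('n cmat \<times> 'n cmat) set" where
  "leaf_alpha K a b = {a} \<times> ((\<lambda>z. b ** z) ` centralizer K a)"

definition leaf_beta :: "('n::finite) cmat set \<Rightarrow> 'n cmat \<Rightarrow> 'n cmat \<Rightarrow> ('n cmat \<times> 'n cmat) set" where
  "leaf_beta K a b = ((\<lambda>z. a ** z) ` centralizer K b) \<times> {b}"

end

theory Submission
  imports Defs
begin

(* The leaf {a} x bK_a is the image of the torus K_a under the continuous injection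
   z |-> (a, b z), which conjugates tau_alpha to left translation by a on K_a, because
   every z in K_a commutes with a; likewise for tau_beta. So it suffices that left
   translation by a topological generator x of a compact abelian group T is ergodic for
   Haar measure. If x S = S, then h S = S for every h in the cyclic group generated by x.
   By inner and outer regularity, translation is continuous in measure, and that group is
   dense in T, so g S - S is null for every g in T. Fubini applied to
   {(g, y). g y in S, y not in S} then gives mu(S) mu(T - S) = 0. *)

lemma matrix_inv_mult:
  fixes A :: "'n::finite cmat"
  assumes "invertible A"
  shows "A ** matrix_inv A = mat 1" and "matrix_inv A ** A = mat 1"
  using someI_ex[OF assms[unfolded invertible_def]] by (simp_all add: matrix_inv_def)

lemma inj_matrix_mult_left:
  fixes A :: "'n::finite cmat"
  assumes "invertible A"
  shows "inj (\<lambda>z. A ** z)"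
  by (rule inj_on_inverseI[of _ "\<lambda>z. matrix_inv A ** z"])
     (simp add: matrix_mul_assoc matrix_inv_mult(2)[OF assms])

lemma bounded_bilinear_matrix_mult:
  "bounded_bilinear ((**) :: 'n::finite cmat \<Rightarrow> 'n cmat \<Rightarrow> 'n cmat)"
proof -
  have "((A::'n cmat) + B) ** C = A ** C + B ** C" for A B C
    by (vector matrix_matrix_mult_def sum.distrib[symmetric] field_simps)
  then have "bilinear ((**) :: 'n cmat \<Rightarrow> 'n cmat \<Rightarrow> 'n cmat)"
    unfolding bilinear_def linear_iff
    by (auto simp: matrix_add_ldistrib scalar_matrix_assoc matrix_scalar_ac)
  then show ?thesis
    by (rule bilinear_conv_bounded_bilinear[THEN iffD1])
qed

lemma continuous_on_matrix_mult_left [continuous_intros]: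
  fixes A :: "'n::finite cmat" and S :: "'n cmat set"
  shows "continuous_on S (\<lambda>z. A ** z)"
  by (intro linear_continuous_on bounded_bilinear.bounded_linear_right bounded_bilinear_matrix_mult)

lemma borel_measurable_matrix_mult:
  "(\<lambda>p::'n::finite cmat \<times> 'n cmat. fst p ** snd p) \<in> borel_measurable borel"
  by (intro borel_measurable_continuous_onI continuous_at_imp_continuous_on ballI
      bounded_bilinear.continuous[OF bounded_bilinear_matrix_mult] continuous_intros)

definition left_translate :: "'n::finite cmat \<Rightarrow> 'n cmat set \<Rightarrow> 'n cmat set" where
  "left_translate g S = (\<lambda>z. g ** z) ` S"

lemma left_translate_one [simp]: "left_translate (mat 1) S = S"
  by (simp add: left_translate_def)

lemma left_translate_left_translate:
  "left_translate g (left_translate h S) = left_translate (g ** h) S"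
  by (simp add: left_translate_def image_image matrix_mul_assoc)

lemma left_translate_eq_vimage:
  assumes "A ** B = mat 1" and "B ** A = mat 1"
  shows "left_translate A S = (\<lambda>z. B ** z) -` S"
proof (intro set_eqI iffI)
  fix x assume "x \<in> (\<lambda>z. B ** z) -` S"
  moreover have "x = A ** (B ** x)" by (simp add: matrix_mul_assoc assms)
  ultimately show "x \<in> left_translate A S" unfolding left_translate_def by blast
qed (auto simp: left_translate_def matrix_mul_assoc assms)

lemma left_translate_diff:
  assumes "invertible g"
  shows "left_translate g (S - S') = left_translate g S - left_translate g S'"
  by (simp add: left_translate_eq_vimage[OF matrix_inv_mult[OF assms]] vimage_Diff)

lemma left_translate_cyclic_group:
  assumes "invertible x" and "left_translate x S = S" and "h \<in> cyclic_group x"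
  shows "left_translate h S = S"
proof -
  have "left_translate (matrix_inv x) S = left_translate (matrix_inv x) (left_translate x S)"
    using assms(2) by simp
  then have inv: "left_translate (matrix_inv x) S = S"
    by (simp add: left_translate_left_translate matrix_inv_mult[OF assms(1)])
  have "left_translate (mpow y n) S = S" if "left_translate y S = S" for y n
    using that by (induction n) (simp_all add: left_translate_left_translate[symmetric])
  then show ?thesis
    using assms(2,3) inv unfolding cyclic_group_def by blast
qed

locale compact_haar =
  fixes T :: "'n::finite cmat set" and \<mu> :: "'n cmat measure"
  assumes subgroup: "matrix_subgroup T" and compact: "compact T" and haar: "haar_measure T \<mu>"
begin

sublocale prob_space \<mu>
  using haar by (simp add: haar_measure_def)

lemma space_eq: "space \<mu> = T"
  and sets_eq: "sets \<mu> = sets (restrict_space borel T)"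
  and emeasure_left_translate: "g \<in> T \<Longrightarrow> A \<in> sets \<mu> \<Longrightarrow> emeasure \<mu> (left_translate g A) = emeasure \<mu> A"
  using haar by (auto simp: haar_measure_def left_translate_def)

lemma one_mem: "mat 1 \<in> T"
  and mult_mem: "x \<in> T \<Longrightarrow> y \<in> T \<Longrightarrow> x ** y \<in> T"
  and inv_mem: "x \<in> T \<Longrightarrow> matrix_inv x \<in> T"
  and invertible: "x \<in> T \<Longrightarrow> invertible x"
  using subgroup unfolding matrix_subgroup_def by blast+

lemma sets_iff: "S \<in> sets \<mu> \<longleftrightarrow> S \<subseteq> T \<and> S \<in> sets borel"
  using compact_imp_closed[OF compact]
  by (simp add: sets_eq sets_restrict_space_iff borel_closed)

lemma borel_measurable_continuous:
  "continuous_on T f \<Longrightarrow> f \<in> borel_measurable \<mu>"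
  using measurable_cong_sets[OF sets_eq refl] borel_measurable_continuous_on_restrict by blast

lemma borel_measurable_pair_mult:
  "(\<lambda>p. fst p ** snd p) \<in> borel_measurable (\<mu> \<Otimes>\<^sub>M \<mu>)"
proof -
  have ident: "(\<lambda>x. x) \<in> borel_measurable \<mu>"
    by (rule borel_measurable_continuous[OF continuous_on_id])
  have "(\<lambda>p. p) \<in> measurable (\<mu> \<Otimes>\<^sub>M \<mu>) (borel \<Otimes>\<^sub>M borel)"
    unfolding measurable_pair_iff comp_def
    by (intro conjI measurable_compose[OF measurable_fst ident] measurable_compose[OF measurable_snd ident])
  then show ?thesis
    using measurable_compose[OF _ borel_measurable_matrix_mult] by (simp add: borel_prod)
qed

lemma sets_left_translate:
  assumes g: "g \<in> T" and S: "S \<in> sets \<mu>"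
  shows "left_translate g S \<in> sets \<mu>"
proof -
  have eq: "left_translate g S = (\<lambda>z. matrix_inv g ** z) -` S"
    by (rule left_translate_eq_vimage[OF matrix_inv_mult[OF invertible[OF g]]])
  have "(\<lambda>z::'n cmat. matrix_inv g ** z) \<in> borel_measurable borel"
    by (intro borel_measurable_continuous_onI continuous_intros)
  then have "left_translate g S \<in> sets borel"
    using S unfolding eq sets_iff by (metis measurable_sets_borel)
  moreover have "left_translate g S \<subseteq> T"
    using S g mult_mem unfolding sets_iff left_translate_def by blast
  ultimately show ?thesis
    by (simp add: sets_iff)
qed

lemma left_translate_matrix_inv:
  assumes g: "g \<in> T" and "S \<subseteq> T"
  shows "left_translate (matrix_inv g) S = {x \<in> T. g ** x \<in> S}"
proof -
  have "left_translate (matrix_inv g) S = (\<lambda>z. g ** z) -` S"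
    using matrix_inv_mult[OF invertible[OF g]] by (intro left_translate_eq_vimage) auto
  moreover have "left_translate (matrix_inv g) S \<subseteq> T"
    using assms inv_mem mult_mem by (auto simp: left_translate_def)
  ultimately show ?thesis
    by auto
qed

lemma measure_left_translate:
  "g \<in> T \<Longrightarrow> S \<in> sets \<mu> \<Longrightarrow> measure \<mu> (left_translate g S) = measure \<mu> S"
  by (simp add: measure_def emeasure_left_translate)

lemma compact_open_approx:
  assumes S: "S \<in> sets \<mu>" and e: "e > 0"
  obtains C U where "compact C" "C \<subseteq> S" "open U" "S \<subseteq> U" "measure \<mu> (U \<inter> T - C) < e"
proof -
  \<comment> \<open>The regularity theorems need a measure on all Borel sets: extend \<open>\<mu>\<close> by zero outside \<open>T\<close>.\<close>
  define \<nu> where "\<nu> = distr \<mu> borel (\<lambda>x. x)"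
  have ident: "(\<lambda>x. x) \<in> measurable \<mu> borel"
    by (rule borel_measurable_continuous[OF continuous_on_id])
  have sets_\<nu>: "sets \<nu> = sets borel" and finite_\<nu>: "emeasure \<nu> (space \<nu>) \<noteq> \<infinity>"
    by (simp_all add: \<nu>_def emeasure_distr[OF ident] space_eq)
  have \<nu>: "emeasure \<nu> B = ennreal (measure \<mu> (B \<inter> T))" if "B \<in> sets borel" for B
    using that by (simp add: \<nu>_def emeasure_distr[OF ident] space_eq emeasure_eq_measure Int_commute)
  have "S \<in> sets borel" "S \<subseteq> T"
    using S sets_iff by auto
  then have \<nu>S: "emeasure \<nu> S = ennreal (measure \<mu> S)" and \<nu>S_finite: "emeasure \<nu> S \<noteq> \<infinity>"
    using \<nu> by (simp_all add: Int_absorb2)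
  have "\<exists>C\<in>{K. K \<subseteq> S \<and> compact K}. emeasure \<nu> S < emeasure \<nu> C + ennreal (e/2)"
    by (rule SUP_approx_ennreal[OF _ _ inner_regular[OF sets_\<nu> finite_\<nu> \<open>S \<in> sets borel\<close>] \<nu>S_finite])
       (use e in auto)
  then obtain C where C: "compact C" "C \<subseteq> S" "emeasure \<nu> S < emeasure \<nu> C + ennreal (e/2)"
    by blast
  have "\<exists>U\<in>{U. S \<subseteq> U \<and> open U}. emeasure \<nu> U < emeasure \<nu> S + ennreal (e/2)"
    by (rule INF_approx_ennreal[OF _ outer_regular[OF sets_\<nu> finite_\<nu> \<open>S \<in> sets borel\<close>] \<nu>S_finite])
       (use e in auto)
  then obtain U where U: "open U" "S \<subseteq> U" "emeasure \<nu> U < emeasure \<nu> S + ennreal (e/2)"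
    by blast
  have "C \<subseteq> T"
    using C(2) \<open>S \<subseteq> T\<close> by blast
  then have C_sets: "C \<in> sets \<mu>" and \<nu>C: "emeasure \<nu> C = ennreal (measure \<mu> C)"
    using C(1) \<nu>[of C] by (auto simp: sets_iff borel_compact Int_absorb2)
  have UT_sets: "U \<inter> T \<in> sets \<mu>" and \<nu>U: "emeasure \<nu> U = ennreal (measure \<mu> (U \<inter> T))"
    using U(1) \<nu>[of U] compact_imp_closed[OF compact] by (auto simp: sets_iff)
  have "ennreal (measure \<mu> S) < ennreal (measure \<mu> C + e/2)"
    using C(3) \<nu>S \<nu>C e by simp
  moreover have "ennreal (measure \<mu> (U \<inter> T)) < ennreal (measure \<mu> S + e/2)"
    using U(3) \<nu>S \<nu>U e by simp
  moreover have "measure \<mu> (U \<inter> T - C) = measure \<mu> (U \<inter> T) - measure \<mu> C"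
    using finite_measure_Diff[OF UT_sets C_sets] C(2) U(2) \<open>C \<subseteq> T\<close> by blast
  ultimately have "measure \<mu> (U \<inter> T - C) < e"
    by (simp add: ennreal_less_iff)
  then show ?thesis
    using that C(1,2) U(1,2) by blast
qed

lemma dist_inv_mult_mult_less:
  assumes "\<delta> > 0"
  obtains \<eta> where "\<eta> > 0"
    and "\<And>g g' c. g \<in> T \<Longrightarrow> g' \<in> T \<Longrightarrow> c \<in> T \<Longrightarrow> dist g g' < \<eta> \<Longrightarrow>
           dist (matrix_inv g' ** (g ** c)) c < \<delta>"
proof -
  interpret mult: bounded_bilinear "(**) :: 'n cmat \<Rightarrow> 'n cmat \<Rightarrow> 'n cmat"
    by (rule bounded_bilinear_matrix_mult)
  obtain K where K: "K > 0" "\<And>(x :: 'n cmat) (y :: 'n cmat). norm (x ** y) \<le> norm x * norm y * K"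
    using mult.pos_bounded by blast
  obtain R where R: "R > 0" "\<And>x. x \<in> T \<Longrightarrow> norm x \<le> R"
    using compact_imp_bounded[OF compact] unfolding bounded_pos by auto
  have RK: "R * R * K * K > 0"
    using R K by simp
  show thesis
  proof (rule that)
    show "\<delta> / (R * R * K * K) > 0"
      using assms RK by simp
    fix g g' c assume T: "g \<in> T" "g' \<in> T" "c \<in> T" and close: "dist g g' < \<delta> / (R * R * K * K)"
    have "matrix_inv g' ** (g ** c) - c = matrix_inv g' ** ((g - g') ** c)"
      by (simp add: mult.diff_left mult.diff_right matrix_mul_assoc
          matrix_inv_mult(2)[OF invertible[OF T(2)]])
    then have "dist (matrix_inv g' ** (g ** c)) c = norm (matrix_inv g' ** ((g - g') ** c))"
      by (simp add: dist_norm)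
    also have "\<dots> \<le> norm (matrix_inv g') * norm ((g - g') ** c) * K"
      by (rule K(2))
    also have "\<dots> \<le> norm (matrix_inv g') * (norm (g - g') * norm c * K) * K"
      using K by (intro mult_right_mono mult_left_mono) auto
    also have "\<dots> \<le> R * (norm (g - g') * R * K) * K"
      using K(1) R(1) R(2)[OF inv_mem[OF T(2)]] R(2)[OF T(3)] by (intro mult_right_mono mult_mono) auto
    also have "\<dots> = (R * R * K * K) * dist g g'"
      by (simp add: dist_norm algebra_simps)
    also have "\<dots> < \<delta>"
      using close RK by (simp add: pos_less_divide_eq mult.commute)
    finally show "dist (matrix_inv g' ** (g ** c)) c < \<delta>" .
  qed
qed

lemma left_translate_compact_subset:
  assumes C: "compact C" "C \<subseteq> T" and U: "open U" "C \<subseteq> U"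
  obtains \<eta> where "\<eta> > 0"
    and "\<And>g g'. g \<in> T \<Longrightarrow> g' \<in> T \<Longrightarrow> dist g g' < \<eta> \<Longrightarrow>
           left_translate g C \<subseteq> left_translate g' (U \<inter> T)"
proof -
  obtain \<delta> where "\<delta> > 0" and \<delta>: "(\<Union>c\<in>C. ball c \<delta>) \<subseteq> U"
    using compact_subset_open_imp_ball_epsilon_subset[OF C(1) U] by blast
  obtain \<eta> where "\<eta> > 0" and \<eta>: "\<And>g g' c. g \<in> T \<Longrightarrow> g' \<in> T \<Longrightarrow> c \<in> T \<Longrightarrow> dist g g' < \<eta> \<Longrightarrow>
      dist (matrix_inv g' ** (g ** c)) c < \<delta>"
    using dist_inv_mult_mult_less[OF \<open>\<delta> > 0\<close>] by blast
  show thesis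
  proof (rule that[OF \<open>\<eta> > 0\<close>], rule subsetI)
    fix g g' x assume g: "g \<in> T" "g' \<in> T" and close: "dist g g' < \<eta>"
      and "x \<in> left_translate g C"
    then obtain c where c: "c \<in> C" "x = g ** c"
      by (auto simp: left_translate_def)
    define y where "y = matrix_inv g' ** (g ** c)"
    have "c \<in> T"
      using c(1) C(2) by blast
    then have "y \<in> U \<inter> T"
      using \<eta>[OF g \<open>c \<in> T\<close> close] \<delta> c(1) g mult_mem inv_mem
      by (fastforce simp: y_def dist_commute)
    moreover have "x = g' ** y"
      by (simp add: y_def c(2) matrix_mul_assoc matrix_inv_mult(1)[OF invertible[OF g(2)]])
    ultimately show "x \<in> left_translate g' (U \<inter> T)"
      by (auto simp: left_translate_def)
  qed
qed

lemma measure_left_translate_diff_small: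
  assumes S: "S \<in> sets \<mu>" and e: "e > 0"
  obtains \<eta> where "\<eta> > 0"
    and "\<And>g g'. g \<in> T \<Longrightarrow> g' \<in> T \<Longrightarrow> dist g g' < \<eta> \<Longrightarrow>
           measure \<mu> (left_translate g S - left_translate g' S) < e"
proof -
  obtain C U where C: "compact C" "C \<subseteq> S" and U: "open U" "S \<subseteq> U"
    and small: "measure \<mu> (U \<inter> T - C) < e/2"
    using compact_open_approx[OF S, of "e/2"] e by auto
  have "S \<subseteq> T"
    using S sets_iff by blast
  obtain \<eta> where "\<eta> > 0" and into: "\<And>g g'. g \<in> T \<Longrightarrow> g' \<in> T \<Longrightarrow> dist g g' < \<eta> \<Longrightarrow>
      left_translate g C \<subseteq> left_translate g' (U \<inter> T)"
    using left_translate_compact_subset[OF C(1)] C(2) U \<open>S \<subseteq> T\<close> by blast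
  have D: "U \<inter> T - C \<in> sets \<mu>"
    using U(1) C(1) C(2) \<open>S \<subseteq> T\<close> compact_imp_closed[OF compact]
    by (auto simp: sets_iff borel_compact)
  show thesis
  proof (rule that[OF \<open>\<eta> > 0\<close>])
    fix g g' assume g: "g \<in> T" "g' \<in> T" and close: "dist g g' < \<eta>"
    have "left_translate g S - left_translate g' S
        \<subseteq> left_translate g (U \<inter> T - C) \<union> left_translate g' (U \<inter> T - C)"
      using into[OF g close] C(2) U(2) \<open>S \<subseteq> T\<close>
      unfolding left_translate_diff[OF invertible[OF g(1)]] left_translate_diff[OF invertible[OF g(2)]]
      by (auto simp: left_translate_def)
    then have "measure \<mu> (left_translate g S - left_translate g' S)
        \<le> measure \<mu> (left_translate g (U \<inter> T - C)) + measure \<mu> (left_translate g' (U \<inter> T - C))"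
      using sets_left_translate[OF g(1) D] sets_left_translate[OF g(2) D]
      by (meson finite_measure_mono measure_Un_le order_trans sets.Un)
    also have "\<dots> < e"
      using small by (simp add: measure_left_translate[OF g(1) D] measure_left_translate[OF g(2) D])
    finally show "measure \<mu> (left_translate g S - left_translate g' S) < e" .
  qed
qed

lemma cyclic_group_subset:
  "x \<in> T \<Longrightarrow> cyclic_group x \<subseteq> T"
proof -
  have "mpow y n \<in> T" if "y \<in> T" for y n
    using that by (induction n) (simp_all add: one_mem mult_mem)
  then show "x \<in> T \<Longrightarrow> cyclic_group x \<subseteq> T"
    unfolding cyclic_group_def using inv_mem by blast
qed

lemma measure_left_translate_diff_eq_0:
  assumes x: "x \<in> T" "closure (cyclic_group x) = T"
    and S: "S \<in> sets \<mu>" "left_translate x S = S" and g: "g \<in> T"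
  shows "measure \<mu> (left_translate g S - S) = 0"
proof -
  have "measure \<mu> (left_translate g S - S) \<le> 0 + e" if "e > 0" for e
  proof -
    obtain \<eta> where "\<eta> > 0" and \<eta>: "\<And>g g'. g \<in> T \<Longrightarrow> g' \<in> T \<Longrightarrow> dist g g' < \<eta> \<Longrightarrow>
        measure \<mu> (left_translate g S - left_translate g' S) < e"
      using measure_left_translate_diff_small[OF S(1) \<open>e > 0\<close>] by blast
    obtain h where h: "h \<in> cyclic_group x" "dist g h < \<eta>"
      using closure_approachableD[OF _ \<open>\<eta> > 0\<close>] g x(2) by blast
    have "left_translate h S = S"
      using left_translate_cyclic_group[OF invertible[OF x(1)] S(2) h(1)] .
    then show ?thesis
      using \<eta>[OF g] h cyclic_group_subset[OF x(1)] by fastforce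
  qed
  then show ?thesis
    using measure_nonneg[of \<mu>] by (meson field_le_epsilon order_antisym)
qed

end

locale compact_abelian_haar = compact_haar +
  assumes commute: "x \<in> T \<Longrightarrow> y \<in> T \<Longrightarrow> x ** y = y ** x"
begin

lemma null_or_conull_if_almost_invariant:
  assumes S: "S \<in> sets \<mu>" and inv: "\<And>g. g \<in> T \<Longrightarrow> measure \<mu> (left_translate g S - S) = 0"
  shows "emeasure \<mu> S = 0 \<or> emeasure \<mu> (T - S) = 0"
proof -
  interpret product: pair_prob_space \<mu> \<mu>
    by (simp add: pair_prob_space_def pair_sigma_finite_def prob_space_axioms prob_space_imp_sigma_finite)
  have "S \<subseteq> T" and TS: "T - S \<in> sets \<mu>"
    using S sets_iff space_eq sets.compl_sets[OF S] by auto
  \<comment> \<open>The slices of \<open>E\<close> at a fixed \<open>g\<close> are the null sets \<open>g\<^sup>-\<^sup>1S - S\<close>; those at a fixed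
    \<open>y \<notin> S\<close> are, by commutativity, the translates \<open>y\<^sup>-\<^sup>1S\<close> of measure \<open>\<mu> S\<close>.\<close>
  define E where "E = {p \<in> T \<times> T. fst p ** snd p \<in> S \<and> snd p \<notin> S}"
  have E: "E \<in> sets (\<mu> \<Otimes>\<^sub>M \<mu>)"
  proof -
    have "E = ((\<lambda>p. fst p ** snd p) -` S \<inter> space (\<mu> \<Otimes>\<^sub>M \<mu>)) \<inter> (snd -` (T - S) \<inter> space (\<mu> \<Otimes>\<^sub>M \<mu>))"
      by (auto simp: E_def space_pair_measure space_eq)
    then show ?thesis
      using S TS \<open>S \<subseteq> T\<close> borel_measurable_pair_mult
      by (auto simp: sets_iff intro!: sets.Int measurable_sets measurable_snd)
  qed
  have "emeasure (\<mu> \<Otimes>\<^sub>M \<mu>) E = (\<integral>\<^sup>+g. emeasure \<mu> (Pair g -` E) \<partial>\<mu>)"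
    by (rule emeasure_pair_measure_alt[OF E])
  also have "\<dots> = (\<integral>\<^sup>+g. 0 \<partial>\<mu>)"
  proof (rule nn_integral_cong)
    fix g assume "g \<in> space \<mu>"
    then have g: "g \<in> T"
      by (simp add: space_eq)
    have "Pair g -` E = left_translate (matrix_inv g) S - S"
      using g by (auto simp: E_def left_translate_matrix_inv[OF g \<open>S \<subseteq> T\<close>])
    then show "emeasure \<mu> (Pair g -` E) = 0"
      using inv[OF inv_mem[OF g]] sets_left_translate[OF inv_mem[OF g] S] S
      by (simp add: emeasure_eq_measure)
  qed
  finally have "emeasure (\<mu> \<Otimes>\<^sub>M \<mu>) E = 0"
    by simp
  moreover have "emeasure (\<mu> \<Otimes>\<^sub>M \<mu>) E = (\<integral>\<^sup>+x. emeasure \<mu> ((\<lambda>g. (g, x)) -` E) \<partial>\<mu>)"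
    by (rule product.emeasure_pair_measure_alt2[OF E])
  also have "\<dots> = (\<integral>\<^sup>+x. emeasure \<mu> S * indicator (T - S) x \<partial>\<mu>)"
  proof (rule nn_integral_cong)
    fix x assume "x \<in> space \<mu>"
    then have x: "x \<in> T"
      by (simp add: space_eq)
    have "(\<lambda>g. (g, x)) -` E = (if x \<in> S then {} else left_translate (matrix_inv x) S)"
      using x commute by (auto simp: E_def left_translate_matrix_inv[OF x \<open>S \<subseteq> T\<close>])
    then show "emeasure \<mu> ((\<lambda>g. (g, x)) -` E) = emeasure \<mu> S * indicator (T - S) x"
      using x emeasure_left_translate[OF inv_mem[OF x] S] by simp
  qed
  also have "\<dots> = emeasure \<mu> S * emeasure \<mu> (T - S)"
    by (rule nn_integral_cmult_indicator[OF TS])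
  finally show ?thesis
    by simp
qed

lemma ergodic_cyclic_left_translation:
  assumes "x \<in> T" and "closure (cyclic_group x) = T"
  shows "ergodic_cyclic \<mu> (\<lambda>z. x ** z)"
  unfolding ergodic_cyclic_def space_eq
  using null_or_conull_if_almost_invariant measure_left_translate_diff_eq_0[OF assms]
  by (simp add: left_translate_def)

end

lemma ergodic_cyclic_distr:
  assumes ergodic: "ergodic_cyclic M S" and f: "f \<in> measurable M N"
    and space_N: "space N = f ` space M" and inj: "inj_on f (space M)"
    and S: "S ` space M \<subseteq> space M"
    and intertwine: "\<And>z. z \<in> space M \<Longrightarrow> \<tau> (f z) = f (S z)"
  shows "ergodic_cyclic (distr M N f) \<tau>"
  unfolding ergodic_cyclic_def
proof (intro ballI impI)
  fix A assume A: "A \<in> sets (distr M N f)" and invariant: "\<tau> ` A = A"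
  define B where "B = f -` A \<inter> space M"
  have "A \<subseteq> f ` space M"
    using sets.sets_into_space[of A N] A space_N by simp
  have "S ` B = B"
  proof (intro equalityI subsetI)
    fix w assume "w \<in> S ` B"
    then obtain z where z: "z \<in> space M" "f z \<in> A" "w = S z"
      by (auto simp: B_def)
    then have "f w = \<tau> (f z)"
      by (simp add: intertwine)
    then show "w \<in> B"
      using z S invariant by (auto simp: B_def)
  next
    fix z assume z: "z \<in> B"
    then obtain p where "p \<in> A" "f z = \<tau> p"
      using invariant by (force simp: B_def)
    moreover obtain w where w: "w \<in> space M" "p = f w"
      using \<open>p \<in> A\<close> \<open>A \<subseteq> f ` space M\<close> by blast
    ultimately have "f z = f (S w)" and "w \<in> B"
      using intertwine by (auto simp: B_def)
    then have "z = S w"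
      using inj z w(1) S by (auto simp: B_def inj_on_def)
    then show "z \<in> S ` B"
      using \<open>w \<in> B\<close> by blast
  qed
  moreover have "B \<in> sets M"
    using measurable_sets[OF f] A B_def by simp
  ultimately have "emeasure M B = 0 \<or> emeasure M (space M - B) = 0"
    using ergodic by (simp add: ergodic_cyclic_def)
  moreover have "f -` (space N - A) \<inter> space M = space M - B"
    using space_N by (auto simp: B_def)
  ultimately show "emeasure (distr M N f) A = 0 \<or>
      emeasure (distr M N f) (space (distr M N f) - A) = 0"
    using A f by (simp add: emeasure_distr B_def sets.compl_sets)
qed

lemma (in compact_abelian_haar) ergodic_cyclic_image:
  assumes x: "x \<in> T" "closure (cyclic_group x) = T"
    and f: "continuous_on T f" "inj_on f T"
    and intertwine: "\<And>z. z \<in> T \<Longrightarrow> \<tau> (f z) = f (x ** z)"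
  shows "ergodic_cyclic (distr \<mu> (restrict_space borel (f ` T)) f) \<tau>"
proof (rule ergodic_cyclic_distr[OF ergodic_cyclic_left_translation[OF x]])
  show "f \<in> measurable \<mu> (restrict_space borel (f ` T))"
    using borel_measurable_continuous[OF f(1)] by (auto intro: measurable_restrict_space2 simp: space_eq)
qed (use f(2) intertwine mult_mem[OF x(1)] in \<open>auto simp: space_eq space_restrict_space\<close>)

lemma generic_compact_abelian_haar:
  assumes "generic K x" and "haar_measure (centralizer K x) \<mu>"
  shows "compact_abelian_haar (centralizer K x) \<mu>"
  using assms
  unfolding generic_def regular_def maximal_torus_def torus_in_def compact_abelian_haar_def
    compact_abelian_haar_axioms_def compact_haar_def
  by auto

lemma ergodic_cyclic_generic_image:
  assumes generic: "generic K x" and haar: "haar_measure (centralizer K x) \<mu>"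
    and f: "continuous_on (centralizer K x) f" "inj_on f (centralizer K x)"
    and intertwine: "\<And>z. z \<in> centralizer K x \<Longrightarrow> \<tau> (f z) = f (x ** z)"
  shows "ergodic_cyclic (distr \<mu> (restrict_space borel (f ` centralizer K x)) f) \<tau>"
proof -
  interpret compact_abelian_haar "centralizer K x" \<mu>
    by (rule generic_compact_abelian_haar[OF generic haar])
  have "x \<in> centralizer K x" and "closure (cyclic_group x) = centralizer K x"
    using generic by (auto simp: generic_def centralizer_def)
  then show ?thesis
    using f intertwine by (rule ergodic_cyclic_image)
qed

theorem corollary5p3:
  fixes G K :: "('n::finite) cmat set" and a b c :: "'n cmat"
  assumes "semisimple_algebraic_group G"
    and "maximal_compact_subgroup G K"
    and "c \<in> K" and "a \<in> K" and "b \<in> K"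
    and "a ** b ** matrix_inv a ** matrix_inv b = c"
  shows "(generic K a \<longrightarrow> (\<forall>\<mu>. haar_measure (centralizer K a) \<mu> \<longrightarrow>
           ergodic_cyclic (distr \<mu> (restrict_space borel (leaf_alpha K a b)) (\<lambda>z. (a, b ** z)))
                          tau_alpha)) \<and>
         (generic K b \<longrightarrow> (\<forall>\<mu>. haar_measure (centralizer K b) \<mu> \<longrightarrow>
           ergodic_cyclic (distr \<mu> (restrict_space borel (leaf_beta K a b)) (\<lambda>z. (a ** z, b)))
                          tau_beta))"
proof (intro conjI impI allI)
  have "invertible a" and "invertible b"
    using assms(2,4,5) by (auto simp: maximal_compact_subgroup_def matrix_subgroup_def)
  then have inj: "inj_on (\<lambda>z. (a, b ** z)) S" "inj_on (\<lambda>z. (a ** z, b)) S" for S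
    using inj_matrix_mult_left by (auto simp: inj_def inj_on_def)
  have leaves: "leaf_alpha K a b = (\<lambda>z. (a, b ** z)) ` centralizer K a"
    "leaf_beta K a b = (\<lambda>z. (a ** z, b)) ` centralizer K b"
    by (auto simp: leaf_alpha_def leaf_beta_def)
  fix \<mu>
  show "ergodic_cyclic (distr \<mu> (restrict_space borel (leaf_alpha K a b)) (\<lambda>z. (a, b ** z))) tau_alpha"
    if "generic K a" and "haar_measure (centralizer K a) \<mu>"
    unfolding leaves
    by (rule ergodic_cyclic_generic_image[OF that _ inj(1)])
       (auto intro!: continuous_intros simp: tau_alpha_def centralizer_def matrix_mul_assoc[symmetric])
  show "ergodic_cyclic (distr \<mu> (restrict_space borel (leaf_beta K a b)) (\<lambda>z. (a ** z, b))) tau_beta"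
    if "generic K b" and "haar_measure (centralizer K b) \<mu>"
    unfolding leaves
    by (rule ergodic_cyclic_generic_image[OF that _ inj(2)])
       (auto intro!: continuous_intros simp: tau_beta_def centralizer_def matrix_mul_assoc[symmetric])
qed

end
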